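(* Let $\mathcal X$ be a finite multi-set of real symmetric $2\times2$ matrices with nonnegative eigenvalues satisfying the hypotheses of Lemma 7 (unique largest eigenvalue $\lambda_1$; unique second largest eigenvalue $\lambda_2$ whose eigenvector is not perpendicular to that of $\lambda_1$), and let $S=\mathrm{Sup}_{\mathrm{LE}}(\mathcal X)$. Then $S\in\mathcal U_p(\mathcal X)$ for every $p>0$.
   Context: $\mathrm{Sym}(2)$: real symmetric $2\times2$ matrices; $A\le_{\mathrm L}B$ means $B-A$ positive semidefinite; $\mathcal U(\mathcal X):=\{Y\in\mathrm{Sym}(2):X\le_{\mathrm L}Y\ \forall X\in\mathcal X\}$. $\mathrm{Sup}_{\mathrm{LE}}(\mathcal X):=\lim_{m\to\infty}\frac1m\log\sum_{X\in\mathcal X}\exp(mX)$. For a positive semidefinite $Y=\lambda uu^{\mathsf T}+\mu vv^{\mathsf T}$ (spectral form), $Y^p:=\lambda^puu^{\mathsf T}+\mu^pvv^{\mathsf T}$. For $\mathcal X$ with nonnegative eigenvalues, $\mathcal X^p:=\{X^p:X\in\mathcal X\}$ and the $p$-power upper bound cone is $\mathcal U_p(\mathcal X):=\{Y\in\mathrm{Sym}(2)\text{ positive semidefinite}:Y^p\in\mathcal U(\mathcal X^p)\}$. Eigenvalue conventions: the eigenvalues of $\mathcal X$ form the multi-set of both eigenvalues of every matrix; unique means occurring exactly once. *)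

theory Defs
  imports "HOL-Analysis.Analysis" "HOL-Library.Multiset"
begin

type_synonym mat2 = "real^2^2"

definition sym2 :: "mat2 \<Rightarrow> bool" where
  "sym2 A \<longleftrightarrow> transpose A = A"

definition outer :: "real^2 \<Rightarrow> real^2 \<Rightarrow> mat2" where
  "outer u v = (\<chi> i j. u$i * v$j)"

definition spectral :: "mat2 \<Rightarrow> real \<Rightarrow> real \<Rightarrow> real^2 \<Rightarrow> real^2 \<Rightarrow> bool" where
  "spectral A lam mu u v \<longleftrightarrow> norm u = 1 \<and> norm v = 1 \<and> u \<bullet> v = 0 \<and>
     A = lam *\<^sub>R outer u u + mu *\<^sub>R outer v v"

definition spec_fun :: "(real \<Rightarrow> real) \<Rightarrow> mat2 \<Rightarrow> mat2" where
  "spec_fun f A = (SOME B. \<exists>lam mu u v. spectral A lam mu u v \<and>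
        B = f lam *\<^sub>R outer u u + f mu *\<^sub>R outer v v)"

definition mexp :: "mat2 \<Rightarrow> mat2" where "mexp = spec_fun exp"
definition mlog :: "mat2 \<Rightarrow> mat2" where "mlog = spec_fun ln"
definition mpow :: "real \<Rightarrow> mat2 \<Rightarrow> mat2" where "mpow p = spec_fun (\<lambda>x. x powr p)"

definition eigs :: "mat2 \<Rightarrow> real multiset" where
  "eigs A = (SOME M. \<exists>lam mu u v. spectral A lam mu u v \<and> M = {#lam, mu#})"

definition eigs_all :: "mat2 multiset \<Rightarrow> real multiset" where
  "eigs_all \<X> = \<Sum>\<^sub># (image_mset eigs \<X>)"

definition is_eigvec :: "mat2 \<Rightarrow> real \<Rightarrow> real^2 \<Rightarrow> bool" where
  "is_eigvec A lam u \<longleftrightarrow> u \<noteq> 0 \<and> A *v u = lam *\<^sub>R u"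

definition psd :: "mat2 \<Rightarrow> bool" where
  "psd A \<longleftrightarrow> sym2 A \<and> (\<forall>x. 0 \<le> x \<bullet> (A *v x))"

definition loewner_le :: "mat2 \<Rightarrow> mat2 \<Rightarrow> bool" where
  "loewner_le A B \<longleftrightarrow> psd (B - A)"

definition upper_cone :: "mat2 multiset \<Rightarrow> mat2 set" where
  "upper_cone \<X> = {Y. sym2 Y \<and> (\<forall>X\<in>#\<X>. loewner_le X Y)}"

definition upper_cone_p :: "real \<Rightarrow> mat2 multiset \<Rightarrow> mat2 set" where
  "upper_cone_p p \<X> = {Y. psd Y \<and> mpow p Y \<in> upper_cone (image_mset (mpow p) \<X>)}"

definition sup_LE :: "mat2 multiset \<Rightarrow> mat2" where
  "sup_LE \<X> = lim (\<lambda>m::nat. (1 / real m) *\<^sub>R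
       mlog (\<Sum>\<^sub># (image_mset (\<lambda>X. mexp (real m *\<^sub>R X)) \<X>)))"

end

theory Submission
  imports Defs
begin

text \<open>Collect the eigenpairs $(\lambda, u)$ of all matrices of $\mathcal X$ in one multiset $T$,
  so that $\sum_{X} e^{tX} = B(t) = \sum_{(\lambda, u) \in T} e^{t\lambda} u u^{\mathsf T}$.
  If $\lambda_1$ is the unique largest eigenvalue, with eigenvector $z$, then
  $e^{-t\lambda_1} B(t) \to z z^{\mathsf T}$: the top eigenvalue of $B(t)$ grows like
  $e^{t\lambda_1}$ and its eigenprojection tends to $z z^{\mathsf T}$. By Cauchy--Binet,
  $\det B(t) = \frac12 \sum_{p, q \in T} (u_p \times u_q)^2 e^{t(\lambda_p + \lambda_q)}$ is a
  positive sum of exponentials, so the bottom eigenvalue grows like $e^{ts}$ for some rate $s$,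
  and $\mathrm{Sup}_{\mathrm{LE}}(\mathcal X) = \lambda_1 z z^{\mathsf T} + s\, w w^{\mathsf T}$ with
  $w \perp z$. The same formula shows $\lambda \le s \le \lambda_1$ for every eigenpair
  $(\lambda, u)$ with $u$ not parallel to $z$, and then $X^p \le_{\mathrm L} S^p$ follows by
  comparing quadratic forms along the two orthonormal frames.\<close>

section \<open>Coordinates in dimension two\<close>

lemma vec2_eq_iff: "(x::real^2) = y \<longleftrightarrow> x$1 = y$1 \<and> x$2 = y$2"
  by (simp add: vec_eq_iff forall_2)

lemma mat2_eq_iff:
  "(A::mat2) = B \<longleftrightarrow> A$1$1 = B$1$1 \<and> A$1$2 = B$1$2 \<and> A$2$1 = B$2$1 \<and> A$2$2 = B$2$2"
  by (simp add: vec_eq_iff forall_2)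

lemma inner_vec2: "(x::real^2) \<bullet> y = x$1 * y$1 + x$2 * y$2"
  by (simp add: inner_vec_def sum_2)

lemma norm_vec2_eq_1: "norm (u::real^2) = 1 \<longleftrightarrow> (u$1)\<^sup>2 + (u$2)\<^sup>2 = 1"
  by (simp add: norm_eq_1 inner_vec2 power2_eq_square)

lemma matrix_vector_mult_vec2_nth: "((A::mat2) *v x)$i = A$i$1 * x$1 + A$i$2 * x$2"
  by (simp add: matrix_vector_mult_def sum_2)

lemma mat_1_nth: "(mat 1 :: mat2)$i$j = (if i = j then 1 else 0)"
  by (simp add: mat_def)

lemma outer_nth [simp]: "outer u v $ i $ j = u$i * v$j"
  by (simp add: outer_def)

lemma sym2_iff: "sym2 A \<longleftrightarrow> A$1$2 = A$2$1"
  by (auto simp: sym2_def mat2_eq_iff transpose_def)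

lemma trace_2: "trace (A::mat2) = A$1$1 + A$2$2"
  by (simp add: trace_def sum_2)

lemmas vec2_simps = vec2_eq_iff mat2_eq_iff inner_vec2 norm_vec2_eq_1
  matrix_vector_mult_vec2_nth mat_1_nth sym2_iff

lemma sym2_outer_comb: "sym2 (c *\<^sub>R outer u u + d *\<^sub>R outer v v)"
  by (simp add: sym2_iff algebra_simps)

lemma sym2_diff: "sym2 A \<Longrightarrow> sym2 B \<Longrightarrow> sym2 (A - B)"
  by (simp add: sym2_iff)

lemma quadratic_form_outer: "x \<bullet> ((c *\<^sub>R outer u u) *v x) = c * (u \<bullet> x)\<^sup>2"
  by (simp add: vec2_simps power2_eq_square algebra_simps)

lemma quadratic_form_add: "x \<bullet> (((M::mat2) + N) *v x) = x \<bullet> (M *v x) + x \<bullet> (N *v x)"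
  by (simp add: vec2_simps algebra_simps)

lemma quadratic_form_diff: "x \<bullet> (((M::mat2) - N) *v x) = x \<bullet> (M *v x) - x \<bullet> (N *v x)"
  by (simp add: vec2_simps algebra_simps)

definition cross2 :: "real^2 \<Rightarrow> real^2 \<Rightarrow> real" where
  "cross2 u v = u$1 * v$2 - u$2 * v$1"

definition orthonormal2 :: "real^2 \<Rightarrow> real^2 \<Rightarrow> bool" where
  "orthonormal2 u v \<longleftrightarrow> norm u = 1 \<and> norm v = 1 \<and> u \<bullet> v = 0"

lemma spectral_iff:
  "spectral A l m u v \<longleftrightarrow> orthonormal2 u v \<and> A = l *\<^sub>R outer u u + m *\<^sub>R outer v v"
  by (auto simp: spectral_def orthonormal2_def)

lemma orthonormal2_coords:
  "orthonormal2 u v \<longleftrightarrow>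
     (u$1)\<^sup>2 + (u$2)\<^sup>2 = 1 \<and> (v$1)\<^sup>2 + (v$2)\<^sup>2 = 1 \<and> u$1 * v$1 + u$2 * v$2 = 0"
  by (simp add: orthonormal2_def vec2_simps)

lemma orthonormal2_commute: "orthonormal2 u v \<Longrightarrow> orthonormal2 v u"
  by (simp add: orthonormal2_def inner_commute)

lemma orthonormal2_columns:
  fixes a b c d :: real
  assumes "a\<^sup>2 + b\<^sup>2 = 1" "c\<^sup>2 + d\<^sup>2 = 1" "a * c + b * d = 0"
  shows "a\<^sup>2 + c\<^sup>2 = 1 \<and> b\<^sup>2 + d\<^sup>2 = 1 \<and> a * b + c * d = 0"
proof -
  have "c = - (a * d - b * c) * b" "d = (a * d - b * c) * a" "(a * d - b * c)\<^sup>2 = 1"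
    using assms by algebra+
  then show ?thesis using assms by algebra
qed

lemma orthonormal2_outer_sum: "orthonormal2 u v \<Longrightarrow> outer u u + outer v v = mat 1"
  using orthonormal2_columns[of "u$1" "u$2" "v$1" "v$2"]
  by (simp add: orthonormal2_coords vec2_simps power2_eq_square algebra_simps)

lemma orthonormal2_inner_sq_sum:
  assumes "orthonormal2 u v" shows "(u \<bullet> x)\<^sup>2 + (v \<bullet> x)\<^sup>2 = x \<bullet> x"
proof -
  have h: "(u$1)\<^sup>2 + (u$2)\<^sup>2 = 1" "(v$1)\<^sup>2 + (v$2)\<^sup>2 = 1" "u$1 * v$1 + u$2 * v$2 = 0"
    using assms by (simp_all add: orthonormal2_coords)
  show ?thesis unfolding inner_vec2 using h orthonormal2_columns[OF h] by algebra
qed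

lemma orthonormal2_cross_sq: "orthonormal2 u v \<Longrightarrow> (cross2 u v)\<^sup>2 = 1"
  unfolding orthonormal2_coords cross2_def by algebra

lemma cross2_eq_0_inner_sq:
  assumes "norm z = 1" "norm u = 1" "cross2 z u = 0"
  shows "(u \<bullet> x)\<^sup>2 = (z \<bullet> x)\<^sup>2"
proof -
  have h: "(z$1)\<^sup>2 + (z$2)\<^sup>2 = 1" "(u$1)\<^sup>2 + (u$2)\<^sup>2 = 1" "z$1 * u$2 - z$2 * u$1 = 0"
    using assms by (simp_all add: vec2_simps cross2_def)
  define k where "k = z$1 * u$1 + z$2 * u$2"
  have k: "u$1 = k * z$1" "u$2 = k * z$2" unfolding k_def using h by algebra+
  have "k\<^sup>2 = 1" using h k by algebra
  then show ?thesis unfolding inner_vec2 k by algebra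
qed

lemma cross2_eq_0_orthonormal:
  assumes "norm z = 1" "orthonormal2 u v" "cross2 z u = 0"
  shows "cross2 z v \<noteq> 0"
proof
  assume "cross2 z v = 0"
  with assms have "cross2 u v = 0"
    unfolding cross2_def orthonormal2_coords norm_vec2_eq_1 by algebra
  then show False using orthonormal2_cross_sq[OF assms(2)] by simp
qed

section \<open>Spectral decomposition of symmetric $2\times2$ matrices\<close>

lemma spectral_swap: "spectral A l m u v \<Longrightarrow> spectral A m l v u"
  by (auto simp: spectral_iff orthonormal2_commute)

lemma spectral_scaleR: "spectral A l m u v \<Longrightarrow> spectral (c *\<^sub>R A) (c * l) (c * m) u v"
  by (simp add: spectral_iff scaleR_add_right)

lemma spectral_trace_det:
  assumes "spectral A l m u v"
  shows "trace A = l + m" "det A = l * m"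
proof -
  have o: "(u$1)\<^sup>2 + (u$2)\<^sup>2 = 1" "(v$1)\<^sup>2 + (v$2)\<^sup>2 = 1" "u$1 * v$1 + u$2 * v$2 = 0"
    and A: "A$1$1 = l * (u$1)\<^sup>2 + m * (v$1)\<^sup>2" "A$2$2 = l * (u$2)\<^sup>2 + m * (v$2)\<^sup>2"
      "A$1$2 = l * u$1 * u$2 + m * v$1 * v$2" "A$2$1 = l * u$1 * u$2 + m * v$1 * v$2"
    using assms by (auto simp: spectral_iff orthonormal2_coords vec2_simps power2_eq_square)
  show "trace A = l + m" unfolding trace_2 A using o orthonormal2_columns[OF o] by algebra
  show "det A = l * m" unfolding det_2 A using o orthonormal2_columns[OF o] by algebra
qed

lemma spectral_eigenvalues_eq:
  assumes "spectral A l m u v" "spectral A l' m' u' v'"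
  shows "l' = l \<and> m' = m \<or> l' = m \<and> m' = l"
proof -
  note t = spectral_trace_det[OF assms(1)] spectral_trace_det[OF assms(2)]
  then have "(l' - l) * (l' - m) = 0" by algebra
  then show ?thesis using t by auto
qed

lemma spectral_projection:
  assumes "spectral A l m u v"
  shows "(l - m) *\<^sub>R outer u u = A - m *\<^sub>R mat 1"
proof -
  have "A = l *\<^sub>R outer u u + m *\<^sub>R outer v v" and "outer v v = mat 1 - outer u u"
    using assms orthonormal2_outer_sum[of u v] by (auto simp: spectral_iff algebra_simps)
  then show ?thesis by (simp add: algebra_simps)
qed

text \<open>The eigenprojections are determined by the matrix whenever the eigenvalues differ,
  and are irrelevant when they coincide; hence $f(A)$ does not depend on the chosen
  decomposition.\<close>
lemma spectral_fun_unique: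
  assumes s: "spectral A l m u v" and s': "spectral A l' m' u' v'"
  shows "f l *\<^sub>R outer u u + f m *\<^sub>R outer v v = f l' *\<^sub>R outer u' u' + f m' *\<^sub>R outer v' v'"
proof -
  have I: "outer v v = mat 1 - outer u u" "outer v' v' = mat 1 - outer u' u'"
    using orthonormal2_outer_sum[of u v] orthonormal2_outer_sum[of u' v'] s s'
    by (auto simp: spectral_iff algebra_simps)
  consider "l = m" | "l \<noteq> m" "l' = l" "m' = m" | "l \<noteq> m" "l' = m" "m' = l"
    using spectral_eigenvalues_eq[OF s s'] by blast
  then show ?thesis
  proof cases
    case 1
    then have "l' = l" "m' = l" using spectral_eigenvalues_eq[OF s s'] by auto
    then show ?thesis using 1 by (simp add: I scaleR_diff_right)
  next
    case 2
    then have "(l - m) *\<^sub>R outer u u = (l - m) *\<^sub>R outer u' u'"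
      using spectral_projection[OF s] spectral_projection[OF s'] by simp
    then show ?thesis using 2 I by simp
  next
    case 3
    then have "(l - m) *\<^sub>R outer u u = (l - m) *\<^sub>R outer v' v'"
      using spectral_projection[OF s] spectral_projection[OF spectral_swap[OF s']] by simp
    then have "outer v' v' = outer u u" "outer u' u' = outer v v" using 3 I by simp_all
    then show ?thesis using 3 by (simp add: add.commute)
  qed
qed

lemma spec_fun_spectral:
  assumes "spectral A l m u v"
  shows "spec_fun f A = f l *\<^sub>R outer u u + f m *\<^sub>R outer v v"
proof -
  have "\<exists>B. \<exists>l m u v. spectral A l m u v \<and> B = f l *\<^sub>R outer u u + f m *\<^sub>R outer v v"
    using assms by blast
  from someI_ex[OF this] obtain l' m' u' v' where
    "spectral A l' m' u' v'" "spec_fun f A = f l' *\<^sub>R outer u' u' + f m' *\<^sub>R outer v' v'"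
    unfolding spec_fun_def by blast
  then show ?thesis using spectral_fun_unique[OF assms] by metis
qed

lemma eigs_spectral:
  assumes "spectral A l m u v"
  shows "eigs A = {#l, m#}"
proof -
  have "\<exists>M. \<exists>l m u v. spectral A l m u v \<and> M = {#l, m#}"
    using assms by blast
  from someI_ex[OF this] obtain l' m' u' v' where
    s': "spectral A l' m' u' v'" and "eigs A = {#l', m'#}"
    unfolding eigs_def by blast
  then show ?thesis using spectral_eigenvalues_eq[OF assms s'] by (auto simp: add_mset_commute)
qed

definition eig_max :: "mat2 \<Rightarrow> real" where
  "eig_max A = (A$1$1 + A$2$2 + sqrt ((A$1$1 - A$2$2)\<^sup>2 + 4 * (A$1$2)\<^sup>2)) / 2"

definition eig_min :: "mat2 \<Rightarrow> real" where
  "eig_min A = (A$1$1 + A$2$2 - sqrt ((A$1$1 - A$2$2)\<^sup>2 + 4 * (A$1$2)\<^sup>2)) / 2"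

lemma spectral_diagonal:
  assumes "A$1$2 = 0" "A$2$1 = 0" "A$2$2 \<le> A$1$1"
  shows "spectral A (eig_max A) (eig_min A) (vector [1, 0]) (vector [0, 1])"
  using assms by (simp add: spectral_iff orthonormal2_coords vec2_simps eig_max_def eig_min_def)

lemma spectral_offdiagonal:
  assumes "sym2 A" "A$1$2 \<noteq> 0"
  defines "b \<equiv> A$1$2" and "d \<equiv> eig_max A - A$1$1"
  defines "s \<equiv> sqrt (b\<^sup>2 + d\<^sup>2)"
  shows "spectral A (eig_max A) (eig_min A) (vector [b / s, d / s]) (vector [- d / s, b / s])"
proof -
  define a c r where "a = A$1$1" "c = A$2$2" "r = sqrt ((a - c)\<^sup>2 + 4 * b\<^sup>2)"
  define l m where "l = (a + c + r) / 2" "m = (a + c - r) / 2"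
  have A: "A$1$1 = a" "A$2$2 = c" "A$1$2 = b" "A$2$1 = b"
    using assms(1) by (simp_all add: sym2_iff b_def a_c_r_def)
  have r2: "r\<^sup>2 = (a - c)\<^sup>2 + 4 * b\<^sup>2" by (simp add: a_c_r_def)
  have L: "eig_max A = l" and M: "eig_min A = m"
    by (simp_all add: eig_max_def eig_min_def a_c_r_def b_def l_m_def)
  have N: "s\<^sup>2 = b\<^sup>2 + d\<^sup>2" "s \<noteq> 0" using assms(2) by (simp_all add: s_def b_def)
  have d: "d = (c - a + r) / 2" by (simp add: d_def L l_m_def A)
  have "a * s\<^sup>2 = l * b\<^sup>2 + m * d\<^sup>2" "c * s\<^sup>2 = l * d\<^sup>2 + m * b\<^sup>2" "b * s\<^sup>2 = l * (b * d) - m * (d * b)"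
    unfolding N d l_m_def using r2 by (simp_all add: field_simps power2_eq_square) algebra+
  then have "a = l * (b / s) * (b / s) + m * (- d / s) * (- d / s)"
    "c = l * (d / s) * (d / s) + m * (b / s) * (b / s)"
    "b = l * (b / s) * (d / s) + m * (- d / s) * (b / s)"
    using N(2) by (simp_all add: field_simps power2_eq_square)
  moreover have "(b / s)\<^sup>2 + (d / s)\<^sup>2 = 1"
    using N assms(2) by (simp add: power_divide b_def flip: add_divide_distrib)
  ultimately show ?thesis
    unfolding spectral_iff orthonormal2_coords vec2_simps L M
    by (simp add: A power2_eq_square algebra_simps)
qed

lemma spectral_eig_max_eig_min:
  assumes "sym2 A"
  obtains u v where "spectral A (eig_max A) (eig_min A) u v"
proof (cases "A$1$2 = 0")
  case True
  show ?thesis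
  proof (cases "A$2$2 \<le> A$1$1")
    case le: True
    have "A$2$1 = 0" using True assms by (simp add: sym2_iff)
    then show ?thesis using that spectral_diagonal[OF True _ le] by blast
  next
    case False
    then have "spectral A (eig_min A) (eig_max A) (vector [1, 0]) (vector [0, 1])"
      using True assms
      by (simp add: spectral_iff orthonormal2_coords vec2_simps eig_max_def eig_min_def)
    then show ?thesis using that spectral_swap by blast
  qed
next
  case False
  then show ?thesis using spectral_offdiagonal[OF assms] that by blast
qed

lemma eig_max_mult_eig_min: "sym2 A \<Longrightarrow> eig_max A * eig_min A = det A"
  by (metis spectral_eig_max_eig_min spectral_trace_det(2))

lemma eig_max_scaleR:
  assumes "0 < c"
  shows "eig_max (c *\<^sub>R A) = c * eig_max A" "eig_min (c *\<^sub>R A) = c * eig_min A"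
proof -
  have "(c * A$1$1 - c * A$2$2)\<^sup>2 + 4 * (c * A$1$2)\<^sup>2 = c\<^sup>2 * ((A$1$1 - A$2$2)\<^sup>2 + 4 * (A$1$2)\<^sup>2)"
    by (simp add: power2_eq_square algebra_simps)
  then have "sqrt ((c * A$1$1 - c * A$2$2)\<^sup>2 + 4 * (c * A$1$2)\<^sup>2)
      = c * sqrt ((A$1$1 - A$2$2)\<^sup>2 + 4 * (A$1$2)\<^sup>2)"
    using assms by (simp add: real_sqrt_mult)
  then show "eig_max (c *\<^sub>R A) = c * eig_max A" "eig_min (c *\<^sub>R A) = c * eig_min A"
    unfolding eig_max_def eig_min_def by (simp_all add: algebra_simps add_divide_distrib diff_divide_distrib)
qed

lemma tendsto_eig_max_eig_min:
  assumes "(F \<longlongrightarrow> A) G"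
  shows "((\<lambda>t. eig_max (F t)) \<longlongrightarrow> eig_max A) G" "((\<lambda>t. eig_min (F t)) \<longlongrightarrow> eig_min A) G"
  unfolding eig_max_def eig_min_def using assms by (auto intro!: tendsto_intros)

lemma eig_max_outer:
  assumes "norm u = 1"
  shows "eig_max (outer u u) = 1" "eig_min (outer u u) = 0"
proof -
  have n: "(u$1)\<^sup>2 + (u$2)\<^sup>2 = 1" using assms by (simp add: norm_vec2_eq_1)
  have "((u$1)\<^sup>2 - (u$2)\<^sup>2)\<^sup>2 + 4 * (u$1 * u$2)\<^sup>2 = ((u$1)\<^sup>2 + (u$2)\<^sup>2)\<^sup>2"
    by (simp add: power2_eq_square algebra_simps)
  then have "sqrt ((u$1 * u$1 - u$2 * u$2)\<^sup>2 + 4 * (u$1 * u$2)\<^sup>2) = 1"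
    using n by (simp add: power2_eq_square)
  then show "eig_max (outer u u) = 1" "eig_min (outer u u) = 0"
    unfolding eig_max_def eig_min_def using n by (simp_all add: power2_eq_square)
qed

lemma spec_fun_eig_projection:
  assumes "sym2 A" "eig_max A \<noteq> eig_min A"
  defines "P \<equiv> (1 / (eig_max A - eig_min A)) *\<^sub>R (A - eig_min A *\<^sub>R mat 1)"
  shows "spec_fun f A = f (eig_max A) *\<^sub>R P + f (eig_min A) *\<^sub>R (mat 1 - P)"
proof -
  obtain u v where s: "spectral A (eig_max A) (eig_min A) u v"
    using spectral_eig_max_eig_min[OF assms(1)] .
  have "P = (1 / (eig_max A - eig_min A)) *\<^sub>R ((eig_max A - eig_min A) *\<^sub>R outer u u)"
    using spectral_projection[OF s] by (simp add: P_def)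
  then have "P = outer u u" using assms(2) by simp
  moreover have "outer v v = mat 1 - outer u u"
    using s orthonormal2_outer_sum[of u v] by (simp add: spectral_iff algebra_simps)
  ultimately show ?thesis using spec_fun_spectral[OF s] by simp
qed

section \<open>Growth rates of sums of exponentials\<close>

lemma sum_mset_nonneg:
  "(\<And>x. x \<in># M \<Longrightarrow> 0 \<le> f x) \<Longrightarrow> (0::'a::ordered_comm_monoid_add) \<le> (\<Sum>x\<in>#M. f x)"
  using sum_mset_mono[of M "\<lambda>_. 0" f] by simp

lemma sum_mset_mono_subset:
  fixes f :: "_ \<Rightarrow> 'a::ordered_comm_monoid_add"
  assumes "A \<subseteq># B" "\<And>x. x \<in># B \<Longrightarrow> 0 \<le> f x"
  shows "(\<Sum>x\<in>#A. f x) \<le> (\<Sum>x\<in>#B. f x)"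
proof -
  obtain C where B: "B = A + C" using assms(1) by (metis subset_mset.le_iff_add)
  have "0 \<le> (\<Sum>x\<in>#C. f x)" using assms(2) by (intro sum_mset_nonneg) (simp add: B)
  then show ?thesis unfolding B by (simp add: add_increasing2)
qed

lemma tendsto_add_const_div_at_top: "((\<lambda>t::real. R + c / t) \<longlongrightarrow> R) at_top"
  using tendsto_add[OF tendsto_const tendsto_divide_0[OF tendsto_const
        filterlim_at_top_imp_at_infinity[OF filterlim_ident]], of R c] by simp

lemma ln_div_ge_of_exp_le:
  fixes c f t R :: real
  assumes "0 < c" "c * exp (t * R) \<le> f" "0 < t"
  shows "R + ln c / t \<le> ln f / t"
proof -
  have "0 < c * exp (t * R)" using assms(1) by simp
  then have "ln (c * exp (t * R)) \<le> ln f" using assms(2) by (subst ln_le_cancel_iff) auto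
  then have "(ln c + t * R) / t \<le> ln f / t"
    using assms(1,3) by (simp add: ln_mult divide_right_mono)
  then show ?thesis using assms(3) by (simp add: add_divide_distrib)
qed

lemma ln_div_le_of_le_exp:
  fixes c f t R :: real
  assumes "0 < f" "f \<le> c * exp (t * R)" "0 < t"
  shows "ln f / t \<le> R + ln c / t"
proof -
  have "0 < c * exp (t * R)" using assms(1,2) by linarith
  then have "0 < c" by (simp add: zero_less_mult_iff)
  moreover have "ln f \<le> ln (c * exp (t * R))" using assms(1,2) by (subst ln_le_cancel_iff) auto
  ultimately have "ln f / t \<le> (ln c + t * R) / t"
    using assms(3) by (simp add: ln_mult divide_right_mono)
  then show ?thesis using assms(3) by (simp add: add_divide_distrib)
qed

lemma tendsto_ln_div_of_ratio:
  fixes g :: "real \<Rightarrow> real" and c l :: real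
  assumes "((\<lambda>t. g t / exp (t * l)) \<longlongrightarrow> c) at_top" "0 < c"
  shows "((\<lambda>t. ln (g t) / t) \<longlongrightarrow> l) at_top"
proof -
  have "((\<lambda>t. ln (g t / exp (t * l))) \<longlongrightarrow> ln c) at_top"
    using tendsto_ln[OF assms(1)] assms(2) by simp
  then have "((\<lambda>t. ln (g t / exp (t * l)) / t) \<longlongrightarrow> 0) at_top"
    by (rule tendsto_divide_0[OF _ filterlim_at_top_imp_at_infinity[OF filterlim_ident]])
  then have "((\<lambda>t. l + ln (g t / exp (t * l)) / t) \<longlongrightarrow> l) at_top"
    using tendsto_add[OF tendsto_const, of _ 0 at_top l] by simp
  moreover have "eventually (\<lambda>t. 0 < g t / exp (t * l)) at_top"
    using order_tendstoD(1)[OF assms] .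
  then have "eventually (\<lambda>t. l + ln (g t / exp (t * l)) / t = ln (g t) / t) at_top"
    using eventually_gt_at_top[of 0]
    by eventually_elim (simp add: ln_div zero_less_divide_iff field_simps)
  ultimately show ?thesis by (simp add: tendsto_cong)
qed

definition exp_sum :: "(real \<Rightarrow> real) \<Rightarrow> bool" where
  "exp_sum f \<longleftrightarrow> (\<exists>C. (\<forall>p\<in>#C. 0 < fst p) \<and> (\<forall>t. f t = (\<Sum>p\<in>#C. fst p * exp (t * snd p))))"

lemma exp_sum_zero: "exp_sum (\<lambda>t. 0)"
  unfolding exp_sum_def by (intro exI[of _ "{#}"]) simp

lemma exp_sum_exp: "0 \<le> c \<Longrightarrow> exp_sum (\<lambda>t. c * exp (t * r))"
  using exp_sum_zero unfolding exp_sum_def by (cases "c = 0") (auto intro!: exI[of _ "{#(c, r)#}"])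

lemma exp_sum_add: "exp_sum f \<Longrightarrow> exp_sum g \<Longrightarrow> exp_sum (\<lambda>t. f t + g t)"
  unfolding exp_sum_def
proof (elim exE conjE)
  fix C D
  assume "\<forall>p\<in>#C. 0 < fst p" "\<forall>t. f t = (\<Sum>p\<in>#C. fst p * exp (t * snd p))"
    "\<forall>p\<in>#D. 0 < fst p" "\<forall>t. g t = (\<Sum>p\<in>#D. fst p * exp (t * snd p))"
  then show "\<exists>E. (\<forall>p\<in>#E. 0 < fst p) \<and> (\<forall>t. f t + g t = (\<Sum>p\<in>#E. fst p * exp (t * snd p)))"
    by (intro exI[of _ "C + D"]) auto
qed

lemma exp_sum_mult:
  assumes "0 \<le> c" "exp_sum f"
  shows "exp_sum (\<lambda>t. c * f t)"
proof (cases "c = 0")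
  case True
  then show ?thesis using exp_sum_zero by simp
next
  case False
  obtain C where "\<forall>p\<in>#C. 0 < fst p" "\<forall>t. f t = (\<Sum>p\<in>#C. fst p * exp (t * snd p))"
    using assms(2) unfolding exp_sum_def by blast
  then show ?thesis
    unfolding exp_sum_def using assms(1) False
    by (intro exI[of _ "image_mset (\<lambda>p. (c * fst p, snd p)) C"])
       (simp add: sum_mset_distrib_left multiset.map_comp o_def mult.assoc)
qed

lemma exp_sum_sum_mset: "(\<And>x. x \<in># M \<Longrightarrow> exp_sum (F x)) \<Longrightarrow> exp_sum (\<lambda>t. \<Sum>x\<in>#M. F x t)"
  by (induction M) (simp_all add: exp_sum_zero exp_sum_add)

text \<open>A positive sum of exponentials grows like its largest exponent $R$:
  $c_0 e^{tR} \le f(t) \le (\sum_i c_i) e^{tR}$ for $t \ge 0$.\<close>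
lemma exp_sum_ln_rate:
  assumes "exp_sum f" "0 < f t0"
  obtains R where "((\<lambda>t. ln (f t) / t) \<longlongrightarrow> R) at_top"
proof -
  obtain C where pos: "\<forall>p\<in>#C. 0 < fst p" and f: "\<And>t. f t = (\<Sum>p\<in>#C. fst p * exp (t * snd p))"
    using assms(1) unfolding exp_sum_def by blast
  have "C \<noteq> {#}" using assms(2) f[of t0] by auto
  define R where "R = Max (snd ` set_mset C)"
  obtain p0 where p0: "p0 \<in># C" "snd p0 = R"
    using Max_in[of "snd ` set_mset C"] \<open>C \<noteq> {#}\<close> unfolding R_def by fastforce
  define K where "K = (\<Sum>p\<in>#C. fst p)"
  have lower: "fst p0 * exp (t * R) \<le> f t" for t
    unfolding f using sum_mset_mono_subset[of "{#p0#}" C "\<lambda>p. fst p * exp (t * snd p)"] p0 pos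
    by (simp add: less_imp_le)
  have f_pos: "0 < f t" for t
    using lower[of t] pos p0(1) by (meson exp_gt_zero mult_pos_pos order_less_le_trans)
  have upper: "f t \<le> K * exp (t * R)" if "0 \<le> t" for t
  proof -
    have "exp (t * snd p) \<le> exp (t * R)" if "p \<in># C" for p
      using that \<open>0 \<le> t\<close> by (simp add: R_def mult_left_mono)
    then have "f t \<le> (\<Sum>p\<in>#C. fst p * exp (t * R))"
      unfolding f using pos by (intro sum_mset_mono mult_left_mono) auto
    then show ?thesis by (simp add: K_def sum_mset_distrib_right)
  qed
  have "eventually (\<lambda>t. R + ln (fst p0) / t \<le> ln (f t) / t) at_top"
    using eventually_gt_at_top[of 0]
  proof eventually_elim
    case (elim t)
    show ?case using pos p0(1) lower[of t] elim by (intro ln_div_ge_of_exp_le) auto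
  qed
  moreover have "eventually (\<lambda>t. ln (f t) / t \<le> R + ln K / t) at_top"
    using eventually_gt_at_top[of 0]
  proof eventually_elim
    case (elim t)
    show ?case using f_pos[of t] upper[of t] elim by (intro ln_div_le_of_le_exp) auto
  qed
  ultimately have "((\<lambda>t. ln (f t) / t) \<longlongrightarrow> R) at_top"
    by (intro tendsto_sandwich[OF _ _ tendsto_add_const_div_at_top tendsto_add_const_div_at_top])
  then show ?thesis using that by blast
qed

section \<open>Sums of exponentially weighted projections\<close>

definition exp_outer_sum :: "(real \<times> (real^2)) multiset \<Rightarrow> real \<Rightarrow> mat2" where
  "exp_outer_sum T t = (\<Sum>p\<in>#T. exp (t * fst p) *\<^sub>R outer (snd p) (snd p))"

lemma exp_outer_sum_empty [simp]: "exp_outer_sum {#} t = 0"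
  by (simp add: exp_outer_sum_def)

lemma exp_outer_sum_add_mset [simp]:
  "exp_outer_sum (add_mset p T) t = exp (t * fst p) *\<^sub>R outer (snd p) (snd p) + exp_outer_sum T t"
  by (simp add: exp_outer_sum_def)

lemma exp_outer_sum_union: "exp_outer_sum (T + U) t = exp_outer_sum T t + exp_outer_sum U t"
  by (simp add: exp_outer_sum_def)

lemma sym2_exp_outer_sum: "sym2 (exp_outer_sum T t)"
  by (induction T) (simp_all add: sym2_iff)

lemma exp_outer_sum_shift:
  "(1 / exp (t * l)) *\<^sub>R exp_outer_sum T t = exp_outer_sum (image_mset (\<lambda>p. (fst p - l, snd p)) T) t"
  by (induction T) (simp_all add: scaleR_add_right exp_diff right_diff_distrib)

lemma tendsto_exp_outer_sum_0:
  "\<forall>p\<in>#T. fst p < 0 \<Longrightarrow> ((\<lambda>t. exp_outer_sum T t) \<longlongrightarrow> 0) at_top"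
proof (induction T)
  case (add p T)
  have "((\<lambda>t. exp (t * fst p)) \<longlongrightarrow> 0) at_top"
    using add.prems filterlim_tendsto_neg_mult_at_bot[OF tendsto_const _ filterlim_ident, of "fst p"]
    by (auto intro: filterlim_compose[OF exp_at_bot] simp: mult.commute)
  then have "((\<lambda>t. exp (t * fst p) *\<^sub>R outer (snd p) (snd p) + exp_outer_sum T t) \<longlongrightarrow> 0 *\<^sub>R outer (snd p) (snd p) + 0) at_top"
    using add by (intro tendsto_add tendsto_scaleR tendsto_const) auto
  then show ?case by simp
qed (simp add: exp_outer_sum_def[abs_def])

definition mixed_det :: "mat2 \<Rightarrow> mat2 \<Rightarrow> real" where
  "mixed_det M N = M$1$1 * N$2$2 + M$2$2 * N$1$1 - M$1$2 * N$2$1 - M$2$1 * N$1$2"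

lemma det_add_mixed_det: "det (M + N) = det M + det N + mixed_det M N"
  by (simp add: det_2 mixed_det_def algebra_simps)

lemma mixed_det_scaleR: "mixed_det (c *\<^sub>R M) (d *\<^sub>R N) = c * d * mixed_det M N"
  by (simp add: mixed_det_def algebra_simps)

lemma mixed_det_sum_mset_right: "mixed_det M (\<Sum>x\<in>#T. F x) = (\<Sum>x\<in>#T. mixed_det M (F x))"
  by (induction T) (simp_all add: mixed_det_def algebra_simps)

lemma mixed_det_outer: "mixed_det (outer u u) (outer v v) = (cross2 u v)\<^sup>2"
  by (simp add: mixed_det_def cross2_def power2_eq_square algebra_simps)

lemma det_scaleR_outer: "det (c *\<^sub>R outer u u) = 0"
  by (simp add: det_2)

text \<open>The two-dimensional Cauchy--Binet formula.\<close>
lemma det_exp_outer_sum: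
  "det (exp_outer_sum T t) =
     (\<Sum>x\<in>#T. \<Sum>y\<in>#T. (cross2 (snd x) (snd y))\<^sup>2 * exp (t * (fst x + fst y))) / 2"
proof (induction T)
  case empty
  then show ?case by (simp add: det_2)
next
  case (add p T)
  define g where "g x y = (cross2 (snd x) (snd y))\<^sup>2 * exp (t * (fst x + fst y))" for x y
  have diag: "g p p = 0" by (simp add: g_def cross2_def)
  have symm: "(\<Sum>x\<in>#T. g x p) = (\<Sum>x\<in>#T. g p x)"
    by (intro arg_cong[where f = sum_mset] image_mset_cong)
       (simp add: g_def cross2_def power2_eq_square algebra_simps)
  have "mixed_det (exp (t * fst p) *\<^sub>R outer (snd p) (snd p)) (exp_outer_sum T t) = (\<Sum>y\<in>#T. g p y)"
    by (simp add: exp_outer_sum_def mixed_det_sum_mset_right mixed_det_scaleR mixed_det_outer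
        sum_mset_distrib_left g_def exp_add distrib_left mult_ac)
  then have "det (exp_outer_sum (add_mset p T) t) = (\<Sum>x\<in>#T. \<Sum>y\<in>#T. g x y) / 2 + (\<Sum>y\<in>#T. g p y)"
    using add.IH unfolding g_def[symmetric] by (simp add: det_add_mixed_det det_scaleR_outer)
  also have "\<dots> = (\<Sum>x\<in>#add_mset p T. \<Sum>y\<in>#add_mset p T. g x y) / 2"
    using diag symm by (simp add: sum_mset.distrib)
  finally show ?case unfolding g_def .
qed

lemma exp_sum_det_exp_outer_sum: "exp_sum (\<lambda>t. det (exp_outer_sum T t))"
proof -
  have "exp_sum (\<lambda>t. (1 / 2) *
      (\<Sum>x\<in>#T. \<Sum>y\<in>#T. (cross2 (snd x) (snd y))\<^sup>2 * exp (t * (fst x + fst y))))"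
    by (intro exp_sum_mult exp_sum_sum_mset exp_sum_exp) simp_all
  then show ?thesis unfolding det_exp_outer_sum by simp
qed

lemma det_exp_outer_sum_ge:
  assumes "{#p, q#} \<subseteq># T"
  shows "(cross2 (snd p) (snd q))\<^sup>2 * exp (t * (fst p + fst q)) \<le> det (exp_outer_sum T t)"
proof -
  define g where "g x y = (cross2 (snd x) (snd y))\<^sup>2 * exp (t * (fst x + fst y))" for x y
  have g_nonneg: "0 \<le> g x y" for x y by (simp add: g_def)
  have "(\<Sum>x\<in>#{#p, q#}. \<Sum>y\<in>#{#p, q#}. g x y) \<le> (\<Sum>x\<in>#{#p, q#}. \<Sum>y\<in>#T. g x y)"
    using assms g_nonneg by (intro sum_mset_mono sum_mset_mono_subset) auto
  also have "\<dots> \<le> (\<Sum>x\<in>#T. \<Sum>y\<in>#T. g x y)"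
    using assms g_nonneg by (intro sum_mset_mono_subset sum_mset_nonneg) auto
  finally have "2 * g p q \<le> (\<Sum>x\<in>#T. \<Sum>y\<in>#T. g x y)"
    by (simp add: g_def cross2_def power2_eq_square algebra_simps)
  then show ?thesis unfolding det_exp_outer_sum g_def by simp
qed

section \<open>Asymptotics of $\frac1t \log \sum_i e^{t \lambda_i} u_i u_i^{\mathsf T}$\<close>

locale dominant_eigenpair =
  fixes T :: "(real \<times> (real^2)) multiset" and l :: real and z :: "real^2"
  assumes top_mem: "(l, z) \<in># T"
    and top_strict: "\<forall>p\<in>#T - {#(l, z)#}. fst p < l"
    and top_unit: "norm z = 1"
    and nondegenerate: "\<exists>q. {#(l, z), q#} \<subseteq># T \<and> cross2 z (snd q) \<noteq> 0"
begin

abbreviation B :: "real \<Rightarrow> mat2" where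
  "B \<equiv> exp_outer_sum T"

lemma tendsto_normalized: "((\<lambda>t. (1 / exp (t * l)) *\<^sub>R B t) \<longlongrightarrow> outer z z) at_top"
proof -
  define T0 where "T0 = T - {#(l, z)#}"
  define T' where "T' = image_mset (\<lambda>p. (fst p - l, snd p)) T0"
  have T: "T = add_mset (l, z) T0" using top_mem by (simp add: T0_def)
  have "(1 / exp (t * l)) *\<^sub>R B t = outer z z + exp_outer_sum T' t" for t
    unfolding exp_outer_sum_shift by (subst T) (simp add: T'_def)
  moreover have "(exp_outer_sum T' \<longlongrightarrow> 0) at_top"
    using top_strict by (intro tendsto_exp_outer_sum_0) (auto simp: T'_def T0_def)
  ultimately show ?thesis using tendsto_add[OF tendsto_const, of "exp_outer_sum T'" 0 at_top "outer z z"]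
    by simp
qed

lemma det_pos: "0 < det (B t)"
proof -
  obtain q where q: "{#(l, z), q#} \<subseteq># T" "cross2 z (snd q) \<noteq> 0"
    using nondegenerate by blast
  have "0 < (cross2 z (snd q))\<^sup>2 * exp (t * (l + fst q))" using q(2) by simp
  also have "\<dots> \<le> det (B t)" using det_exp_outer_sum_ge[OF q(1)] by simp
  finally show ?thesis .
qed

lemma tendsto_eig_ratios:
  "((\<lambda>t. eig_max (B t) / exp (t * l)) \<longlongrightarrow> 1) at_top"
  "((\<lambda>t. eig_min (B t) / exp (t * l)) \<longlongrightarrow> 0) at_top"
  using tendsto_eig_max_eig_min[OF tendsto_normalized] eig_max_outer[OF top_unit]
  by (simp_all add: eig_max_scaleR)

lemma eventually_eig_min_pos:
  "eventually (\<lambda>t. 0 < eig_min (B t) \<and> eig_min (B t) < eig_max (B t)) at_top"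
proof -
  have "eventually (\<lambda>t. 1/2 < eig_max (B t) / exp (t * l)) at_top"
    by (rule order_tendstoD(1)[OF tendsto_eig_ratios(1)]) simp
  moreover have "eventually (\<lambda>t. eig_min (B t) / exp (t * l) < 1/2) at_top"
    by (rule order_tendstoD(2)[OF tendsto_eig_ratios(2)]) simp
  ultimately show ?thesis
  proof eventually_elim
  case (elim t)
  have "0 < exp (t * l)" by simp
  with elim have "exp (t * l) < 2 * eig_max (B t)" "2 * eig_min (B t) < exp (t * l)"
    by (simp_all add: field_simps)
  with \<open>0 < exp (t * l)\<close> have "0 < eig_max (B t)" "eig_min (B t) < eig_max (B t)"
    by linarith+
  moreover have "eig_max (B t) * eig_min (B t) = det (B t)"
    using eig_max_mult_eig_min[OF sym2_exp_outer_sum] .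
  ultimately have "0 < eig_min (B t)" using det_pos[of t] zero_less_mult_pos by metis
  with \<open>eig_min (B t) < eig_max (B t)\<close> show ?case by simp
  qed
qed

lemma tendsto_ln_eig_max: "((\<lambda>t. ln (eig_max (B t)) / t) \<longlongrightarrow> l) at_top"
  by (rule tendsto_ln_div_of_ratio[OF tendsto_eig_ratios(1)]) simp

text \<open>The exponential growth rate of the smaller eigenvalue of $B(t)$.\<close>
definition second_rate :: real where
  "second_rate = Lim at_top (\<lambda>t. ln (det (B t)) / t) - l"

lemma tendsto_ln_det: "((\<lambda>t. ln (det (B t)) / t) \<longlongrightarrow> l + second_rate) at_top"
proof -
  obtain R where "((\<lambda>t. ln (det (B t)) / t) \<longlongrightarrow> R) at_top"
    using exp_sum_ln_rate[OF exp_sum_det_exp_outer_sum det_pos] .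
  then show ?thesis by (simp add: second_rate_def tendsto_Lim)
qed

lemma tendsto_ln_eig_min: "((\<lambda>t. ln (eig_min (B t)) / t) \<longlongrightarrow> second_rate) at_top"
proof -
  have "((\<lambda>t. ln (det (B t)) / t - ln (eig_max (B t)) / t) \<longlongrightarrow> l + second_rate - l) at_top"
    by (intro tendsto_diff tendsto_ln_det tendsto_ln_eig_max)
  moreover have "eventually (\<lambda>t. ln (det (B t)) / t - ln (eig_max (B t)) / t
      = ln (eig_min (B t)) / t) at_top"
    using eventually_eig_min_pos
  proof eventually_elim
    case (elim t)
    then have "0 < eig_max (B t)" by linarith
    then have "ln (det (B t)) = ln (eig_max (B t)) + ln (eig_min (B t))"
      using elim by (simp add: eig_max_mult_eig_min[OF sym2_exp_outer_sum, symmetric] ln_mult)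
    then show ?case by (simp add: diff_divide_distrib[symmetric])
  qed
  ultimately show ?thesis by (simp add: tendsto_cong)
qed

lemma tendsto_eig_projection:
  "((\<lambda>t. (1 / (eig_max (B t) - eig_min (B t))) *\<^sub>R (B t - eig_min (B t) *\<^sub>R mat 1))
     \<longlongrightarrow> outer z z) at_top"
proof -
  let ?n = "\<lambda>t. exp (t * l)"
  have "((\<lambda>t. (1 / (eig_max (B t) / ?n t - eig_min (B t) / ?n t)) *\<^sub>R
      ((1 / ?n t) *\<^sub>R B t - (eig_min (B t) / ?n t) *\<^sub>R mat 1))
      \<longlongrightarrow> (1 / (1 - 0)) *\<^sub>R (outer z z - 0 *\<^sub>R mat 1)) at_top"
    using tendsto_eig_ratios tendsto_normalized
    by (intro tendsto_scaleR tendsto_divide tendsto_diff tendsto_const) simp_all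
  moreover have "(1 / (eig_max (B t) / ?n t - eig_min (B t) / ?n t)) *\<^sub>R
      ((1 / ?n t) *\<^sub>R B t - (eig_min (B t) / ?n t) *\<^sub>R mat 1)
      = (1 / (eig_max (B t) - eig_min (B t))) *\<^sub>R (B t - eig_min (B t) *\<^sub>R mat 1)" for t
  proof -
    have "(1 / ?n t) *\<^sub>R B t - (eig_min (B t) / ?n t) *\<^sub>R mat 1
        = (1 / ?n t) *\<^sub>R (B t - eig_min (B t) *\<^sub>R mat 1)"
      by (simp add: scaleR_diff_right)
    moreover have "1 / (eig_max (B t) / ?n t - eig_min (B t) / ?n t) * (1 / ?n t)
        = 1 / (eig_max (B t) - eig_min (B t))"
      by (simp add: diff_divide_distrib[symmetric])
    ultimately show ?thesis by simp
  qed
  ultimately show ?thesis by simp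
qed

lemma tendsto_log_exp_outer_sum:
  "((\<lambda>t. (1 / t) *\<^sub>R spec_fun ln (B t))
     \<longlongrightarrow> l *\<^sub>R outer z z + second_rate *\<^sub>R (mat 1 - outer z z)) at_top"
proof -
  define P where "P t = (1 / (eig_max (B t) - eig_min (B t))) *\<^sub>R (B t - eig_min (B t) *\<^sub>R mat 1)"
    for t
  have "((\<lambda>t. (ln (eig_max (B t)) / t) *\<^sub>R P t + (ln (eig_min (B t)) / t) *\<^sub>R (mat 1 - P t))
      \<longlongrightarrow> l *\<^sub>R outer z z + second_rate *\<^sub>R (mat 1 - outer z z)) at_top"
    using tendsto_ln_eig_max tendsto_ln_eig_min tendsto_eig_projection unfolding P_def[abs_def]
    by (intro tendsto_add tendsto_scaleR tendsto_diff tendsto_const)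
  moreover have "eventually (\<lambda>t. (ln (eig_max (B t)) / t) *\<^sub>R P t + (ln (eig_min (B t)) / t) *\<^sub>R (mat 1 - P t)
      = (1 / t) *\<^sub>R spec_fun ln (B t)) at_top"
    using eventually_eig_min_pos
  proof eventually_elim
    case (elim t)
    then show ?case
      using spec_fun_eig_projection[OF sym2_exp_outer_sum, of T t ln]
      by (simp add: P_def scaleR_add_right)
  qed
  ultimately show ?thesis by (simp add: tendsto_cong)
qed

lemma second_rate_le: "second_rate \<le> l"
proof (rule tendsto_le[OF _ tendsto_ln_eig_max tendsto_ln_eig_min])
  show "eventually (\<lambda>t. ln (eig_min (B t)) / t \<le> ln (eig_max (B t)) / t) at_top"
    using eventually_eig_min_pos eventually_gt_at_top[of 0]
    by eventually_elim (simp add: divide_right_mono)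
qed simp

text \<open>Every eigenvector not parallel to $z$ contributes to $\det B(t)$ together with $z$.\<close>
lemma second_rate_ge:
  assumes "{#(l, z), p#} \<subseteq># T" "cross2 z (snd p) \<noteq> 0"
  shows "fst p \<le> second_rate"
proof -
  define c where "c = (cross2 z (snd p))\<^sup>2"
  have "0 < c" using assms(2) by (simp add: c_def)
  have ev: "eventually (\<lambda>t. l + fst p + ln c / t \<le> ln (det (B t)) / t) at_top"
    using eventually_gt_at_top[of 0]
  proof eventually_elim
    case (elim t)
    show ?case
      using det_exp_outer_sum_ge[OF assms(1), of t] \<open>0 < c\<close> elim
      by (intro ln_div_ge_of_exp_le) (simp_all add: c_def)
  qed
  have "l + fst p \<le> l + second_rate"
    by (rule tendsto_le[OF _ tendsto_ln_det tendsto_add_const_div_at_top]) (use ev in simp_all)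
  then show ?thesis by simp
qed

end

section \<open>Eigenpairs of a multiset of matrices\<close>

definition eigenpairs :: "mat2 \<Rightarrow> (real \<times> (real^2)) multiset" where
  "eigenpairs X = (SOME P. \<exists>a b u v. spectral X a b u v \<and> P = {#(a, u), (b, v)#})"

definition eigenpairs_all :: "mat2 multiset \<Rightarrow> (real \<times> (real^2)) multiset" where
  "eigenpairs_all \<X> = (\<Sum>X\<in>#\<X>. eigenpairs X)"

lemma eigenpairs_spectral:
  assumes "sym2 X"
  obtains a b u v where "spectral X a b u v" "eigenpairs X = {#(a, u), (b, v)#}"
proof -
  obtain u v where "spectral X (eig_max X) (eig_min X) u v"
    using spectral_eig_max_eig_min[OF assms] .
  then have "\<exists>P. \<exists>a b u v. spectral X a b u v \<and> P = {#(a, u), (b, v)#}" by blast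
  from someI_ex[OF this] show ?thesis
    using that unfolding eigenpairs_def by blast
qed

lemma eigenpairs_mem_spectral:
  assumes "sym2 X" "(a, u) \<in># eigenpairs X"
  obtains b v where "spectral X a b u v" "eigenpairs X = {#(a, u), (b, v)#}"
proof -
  obtain a' b' u' v' where s: "spectral X a' b' u' v'" and e: "eigenpairs X = {#(a', u'), (b', v')#}"
    using eigenpairs_spectral[OF assms(1)] .
  show ?thesis
  proof (cases "(a, u) = (a', u')")
    case True
    then show ?thesis using that s e by simp
  next
    case False
    then have "a = b'" "u = v'" using assms(2) e by auto
    moreover have "eigenpairs X = {#(b', v'), (a', u')#}" using e by (simp add: add_mset_commute)
    ultimately show ?thesis using that[of a' u'] spectral_swap[OF s] by simp
  qed
qed

lemma eigs_eq_eigenpairs: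
  assumes "sym2 X" shows "eigs X = image_mset fst (eigenpairs X)"
proof -
  obtain a b u v where "spectral X a b u v" "eigenpairs X = {#(a, u), (b, v)#}"
    using eigenpairs_spectral[OF assms] .
  then show ?thesis by (simp add: eigs_spectral)
qed

lemma mexp_eq_exp_outer_sum:
  assumes "sym2 X" shows "mexp (t *\<^sub>R X) = exp_outer_sum (eigenpairs X) t"
proof -
  obtain a b u v where "spectral X a b u v" "eigenpairs X = {#(a, u), (b, v)#}"
    using eigenpairs_spectral[OF assms] .
  then show ?thesis
    by (simp add: mexp_def spec_fun_spectral[OF spectral_scaleR] mult.commute)
qed

lemma eigs_all_eq_eigenpairs_all:
  "\<forall>X\<in>#\<X>. sym2 X \<Longrightarrow> eigs_all \<X> = image_mset fst (eigenpairs_all \<X>)"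
  unfolding eigs_all_def eigenpairs_all_def
  by (induction \<X>) (simp_all add: eigs_eq_eigenpairs)

lemma sum_mexp_eq_exp_outer_sum:
  "\<forall>X\<in>#\<X>. sym2 X \<Longrightarrow> (\<Sum>X\<in>#\<X>. mexp (t *\<^sub>R X)) = exp_outer_sum (eigenpairs_all \<X>) t"
  unfolding eigenpairs_all_def
  by (induction \<X>) (simp_all add: mexp_eq_exp_outer_sum exp_outer_sum_union)

lemma eigenpairs_subset_eigenpairs_all:
  assumes "X \<in># \<X>" shows "eigenpairs X \<subseteq># eigenpairs_all \<X>"
proof -
  obtain \<Y> where "\<X> = add_mset X \<Y>" using mset_add[OF assms] .
  then show ?thesis by (simp add: eigenpairs_all_def)
qed

lemma unique_max_fst:
  fixes T :: "('a::linorder \<times> 'b) multiset"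
  assumes "count (image_mset fst T) l = 1" "\<forall>x\<in>#image_mset fst T. x \<le> l"
  obtains z where "(l, z) \<in># T" "\<forall>p\<in>#T - {#(l, z)#}. fst p < l"
proof -
  have "l \<in># image_mset fst T" using assms(1) count_greater_zero_iff[of "image_mset fst T" l] by simp
  then obtain z where z: "(l, z) \<in># T" by force
  have "count (image_mset fst (T - {#(l, z)#})) l = 0"
    using assms(1) z by (simp add: image_mset_Diff)
  then have ne: "fst p \<noteq> l" if "p \<in># T - {#(l, z)#}" for p
    using that by (auto simp: count_eq_zero_iff)
  have le: "fst p \<le> l" if "p \<in># T - {#(l, z)#}" for p
    using assms(2) that by (auto dest: in_diffD)
  have "\<forall>p\<in>#T - {#(l, z)#}. fst p < l"
    using ne le by (simp add: order.not_eq_order_implies_strict)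
  then show ?thesis using that[OF z] by blast
qed

lemma sup_LE_dominant:
  assumes sym: "\<forall>X\<in>#\<X>. sym2 X"
    and top: "count (eigs_all \<X>) l = 1" "\<forall>x\<in>#eigs_all \<X>. x \<le> l"
  obtains z w b s where "orthonormal2 z w" "(b, w) \<in># eigenpairs_all \<X>"
    "sup_LE \<X> = l *\<^sub>R outer z z + s *\<^sub>R outer w w" "s \<le> l"
    "\<forall>q\<in>#eigenpairs_all \<X>. fst q \<le> s \<or> cross2 z (snd q) = 0"
proof -
  let ?T = "eigenpairs_all \<X>"
  obtain z where z: "(l, z) \<in># ?T" "\<forall>p\<in>#?T - {#(l, z)#}. fst p < l"
    using unique_max_fst top unfolding eigs_all_eq_eigenpairs_all[OF sym] by blast
  then obtain X where X: "X \<in># \<X>" "(l, z) \<in># eigenpairs X"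
    unfolding eigenpairs_all_def by auto
  obtain b w where "spectral X l b z w" and eX: "eigenpairs X = {#(l, z), (b, w)#}"
    using eigenpairs_mem_spectral[OF _ X(2)] sym X(1) by blast
  then have zw: "orthonormal2 z w" by (simp add: spectral_iff)
  have sub: "{#(l, z), (b, w)#} \<subseteq># ?T"
    using eigenpairs_subset_eigenpairs_all[OF X(1)] eX by simp
  interpret dominant_eigenpair ?T l z
  proof
    show "norm z = 1" using zw by (simp add: orthonormal2_def)
    show "\<exists>q. {#(l, z), q#} \<subseteq># ?T \<and> cross2 z (snd q) \<noteq> 0"
      using sub orthonormal2_cross_sq[OF zw] by (intro exI[of _ "(b, w)"]) auto
  qed (use z in auto)
  have "((\<lambda>m. (1 / real m) *\<^sub>R spec_fun ln (exp_outer_sum ?T (real m)))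
      \<longlongrightarrow> l *\<^sub>R outer z z + second_rate *\<^sub>R (mat 1 - outer z z)) sequentially"
    using filterlim_compose[OF tendsto_log_exp_outer_sum filterlim_real_sequentially] .
  moreover have "mat 1 - outer z z = outer w w"
    using orthonormal2_outer_sum[OF zw] by (metis add_diff_cancel_left')
  ultimately have "sup_LE \<X> = l *\<^sub>R outer z z + second_rate *\<^sub>R outer w w"
    by (simp add: sup_LE_def mlog_def sum_mexp_eq_exp_outer_sum[OF sym] limI)
  moreover have "\<forall>p\<in>#?T. fst p \<le> second_rate \<or> cross2 z (snd p) = 0"
  proof
    fix p assume p: "p \<in># ?T"
    show "fst p \<le> second_rate \<or> cross2 z (snd p) = 0"
    proof (cases "p = (l, z)")
      case True
      then show ?thesis by (simp add: cross2_def)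
    next
      case False
      then have "{#(l, z), p#} \<subseteq># ?T"
        using z(1) p by (simp add: insert_subset_eq_iff in_diff_count flip: count_greater_zero_iff)
      then show ?thesis using second_rate_ge by blast
    qed
  qed
  moreover have "(b, w) \<in># ?T" using sub by (auto simp: insert_subset_eq_iff dest: in_diffD)
  ultimately show ?thesis using that[OF zw] second_rate_le by blast
qed

section \<open>The $p$-power upper bound\<close>

lemma psd_outer_comb: "0 \<le> c \<Longrightarrow> 0 \<le> d \<Longrightarrow> psd (c *\<^sub>R outer u u + d *\<^sub>R outer v v)"
  unfolding psd_def by (simp add: sym2_outer_comb quadratic_form_add quadratic_form_outer)

text \<open>With $x$ fixed, write $Z, W, U, V$ for the squared components of $x$ along $z, w, u, v$,
  so that $Z + W = U + V$. If $u$ (or $v$) is parallel to $z$, the other vector is parallel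
  to $w$ and the comparison is termwise; otherwise $a, b \le s$ and the form is
  $(f\,l - f\,s) Z + (f\,s - f\,a) U + (f\,s - f\,b) V$.\<close>
lemma psd_spectral_fun_diff:
  fixes f :: "real \<Rightarrow> real"
  assumes zw: "orthonormal2 z w" and uv: "orthonormal2 u v" and f: "mono_on {0..} f"
    and ab: "0 \<le> a" "0 \<le> b" "a \<le> l" "b \<le> l" and s: "0 \<le> s" "s \<le> l"
    and ca: "a \<le> s \<or> cross2 z u = 0" and cb: "b \<le> s \<or> cross2 z v = 0"
  shows "psd (f l *\<^sub>R outer z z + f s *\<^sub>R outer w w - (f a *\<^sub>R outer u u + f b *\<^sub>R outer v v))"
  unfolding psd_def
proof (intro conjI allI)
  show "sym2 (f l *\<^sub>R outer z z + f s *\<^sub>R outer w w - (f a *\<^sub>R outer u u + f b *\<^sub>R outer v v))"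
    by (intro sym2_diff sym2_outer_comb)
  fix x
  define Z W U V where "Z = (z \<bullet> x)\<^sup>2" "W = (w \<bullet> x)\<^sup>2" "U = (u \<bullet> x)\<^sup>2" "V = (v \<bullet> x)\<^sup>2"
  have form: "x \<bullet> ((f l *\<^sub>R outer z z + f s *\<^sub>R outer w w - (f a *\<^sub>R outer u u + f b *\<^sub>R outer v v)) *v x)
     = f l * Z + f s * W - f a * U - f b * V"
    unfolding quadratic_form_add quadratic_form_diff quadratic_form_outer Z_W_U_V_def by simp
  have sum: "Z + W = U + V"
    unfolding Z_W_U_V_def using orthonormal2_inner_sq_sum[OF zw] orthonormal2_inner_sq_sum[OF uv]
    by simp
  have nonneg: "0 \<le> Z" "0 \<le> W" "0 \<le> U" "0 \<le> V" unfolding Z_W_U_V_def by simp_all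
  have mono: "f r \<le> f r'" if "0 \<le> r" "r \<le> r'" for r r'
    using that by (intro mono_onD[OF f]) simp_all
  have unit: "norm z = 1" "norm u = 1" "norm v = 1"
    using zw uv by (simp_all add: orthonormal2_def)
  consider "cross2 z u = 0" "b \<le> s" | "cross2 z v = 0" "a \<le> s" | "a \<le> s" "b \<le> s"
    using ca cb cross2_eq_0_orthonormal[OF unit(1) uv] by blast
  then have "0 \<le> f l * Z + f s * W - f a * U - f b * V"
  proof cases
    case 1
    then have "U = Z" "V = W"
      using cross2_eq_0_inner_sq[OF unit(1,2)] sum by (simp_all add: Z_W_U_V_def)
    moreover have "0 \<le> (f l - f a) * Z + (f s - f b) * W"
      using 1 mono ab nonneg by (intro add_nonneg_nonneg mult_nonneg_nonneg) simp_all
    ultimately show ?thesis by (simp add: algebra_simps)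
  next
    case 2
    then have "V = Z" "U = W"
      using cross2_eq_0_inner_sq[OF unit(1,3)] sum by (simp_all add: Z_W_U_V_def)
    moreover have "0 \<le> (f l - f b) * Z + (f s - f a) * W"
      using 2 mono ab nonneg by (intro add_nonneg_nonneg mult_nonneg_nonneg) simp_all
    ultimately show ?thesis by (simp add: algebra_simps)
  next
    case 3
    have "0 \<le> (f l - f s) * Z + (f s - f a) * U + (f s - f b) * V"
      using 3 mono ab s nonneg by (intro add_nonneg_nonneg mult_nonneg_nonneg) simp_all
    moreover have "f s * Z + f s * W = f s * U + f s * V"
      using arg_cong[OF sum, of "\<lambda>y. f s * y"] by (simp only: distrib_left)
    ultimately show ?thesis by (simp add: left_diff_distrib)
  qed
  then show "0 \<le> x \<bullet> ((f l *\<^sub>R outer z z + f s *\<^sub>R outer w w - (f a *\<^sub>R outer u u + f b *\<^sub>R outer v v)) *v x)"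
    unfolding form .
qed

lemma upper_cone_p_memberI:
  assumes sym: "\<forall>X\<in>#\<X>. sym2 X" and zw: "orthonormal2 z w" and s: "0 \<le> s" "s \<le> l"
    and p: "0 \<le> p"
    and eigenpairs: "\<forall>q\<in>#eigenpairs_all \<X>. 0 \<le> fst q \<and> fst q \<le> l \<and> (fst q \<le> s \<or> cross2 z (snd q) = 0)"
  shows "l *\<^sub>R outer z z + s *\<^sub>R outer w w \<in> upper_cone_p p \<X>"
proof -
  let ?S = "l *\<^sub>R outer z z + s *\<^sub>R outer w w"
  have S: "spectral ?S l s z w" using zw by (simp add: spectral_iff)
  have mono: "mono_on {0..} (\<lambda>x. x powr p)"
    using p by (auto intro: mono_onI powr_mono2)
  have "loewner_le (mpow p X) (mpow p ?S)" if X_mem: "X \<in># \<X>" for X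
  proof -
    obtain a b u v where X: "spectral X a b u v" and e: "eigenpairs X = {#(a, u), (b, v)#}"
      using eigenpairs_spectral sym X_mem by blast
    have "(a, u) \<in># eigenpairs_all \<X>" "(b, v) \<in># eigenpairs_all \<X>"
      using mset_subset_eqD[OF eigenpairs_subset_eigenpairs_all[OF X_mem]] e by simp_all
    then have "0 \<le> a" "0 \<le> b" "a \<le> l" "b \<le> l" "a \<le> s \<or> cross2 z u = 0" "b \<le> s \<or> cross2 z v = 0"
      using eigenpairs by fastforce+
    moreover have "orthonormal2 u v" using X by (simp add: spectral_iff)
    ultimately show ?thesis
      unfolding loewner_le_def mpow_def spec_fun_spectral[OF S] spec_fun_spectral[OF X]
      using psd_spectral_fun_diff[OF zw _ mono _ _ _ _ s] by simp
  qed
  moreover have "sym2 (mpow p ?S)"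
    unfolding mpow_def spec_fun_spectral[OF S] by (rule sym2_outer_comb)
  ultimately show ?thesis
    using psd_outer_comb s by (auto simp: upper_cone_p_def upper_cone_def)
qed

theorem lemma8:
  fixes \<X> :: "mat2 multiset" and lam1 lam2 :: real
  assumes sym: "\<forall>X\<in>#\<X>. sym2 X"
    and nonneg: "\<forall>X\<in>#\<X>. \<forall>x\<in>#eigs X. 0 \<le> x"
    and top1: "count (eigs_all \<X>) lam1 = 1" "\<forall>x\<in>#eigs_all \<X>. x \<le> lam1"
    and top2: "count (eigs_all \<X>) lam2 = 1" "lam2 \<noteq> lam1"
              "\<forall>x\<in>#eigs_all \<X>. x \<noteq> lam1 \<longrightarrow> x \<le> lam2"
    and nonperp: "\<forall>X1\<in>#\<X>. \<forall>X2\<in>#\<X>. \<forall>u1 u2.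
                    is_eigvec X1 lam1 u1 \<longrightarrow> is_eigvec X2 lam2 u2 \<longrightarrow> u1 \<bullet> u2 \<noteq> 0"
    and p: "p > 0"
  shows "sup_LE \<X> \<in> upper_cone_p p \<X>"
proof -
  obtain z w b s where zw: "orthonormal2 z w" and b: "(b, w) \<in># eigenpairs_all \<X>"
    and S: "sup_LE \<X> = lam1 *\<^sub>R outer z z + s *\<^sub>R outer w w" and "s \<le> lam1"
    and below: "\<forall>q\<in>#eigenpairs_all \<X>. fst q \<le> s \<or> cross2 z (snd q) = 0"
    using sup_LE_dominant[OF sym top1] .
  have "\<forall>x\<in>#eigs_all \<X>. 0 \<le> x \<and> x \<le> lam1"
    using nonneg top1(2) by (auto simp: eigs_all_def)
  then have eigs: "\<forall>q\<in>#eigenpairs_all \<X>. 0 \<le> fst q \<and> fst q \<le> lam1"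
    unfolding eigs_all_eq_eigenpairs_all[OF sym] by simp
  have "0 \<le> s"
    using below eigs b orthonormal2_cross_sq[OF zw] by fastforce
  then show ?thesis
    unfolding S using upper_cone_p_memberI[OF sym zw _ \<open>s \<le> lam1\<close>] eigs below p by simp
qed

end
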